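(* Let $T\in\mathrm{Aut}_1(X,\mathcal{A},\mu)$. If $T$ is conservative, then $\chi(T)=0$.
   Context: $(X,\mathcal{A},\mu)$ is a standard $\sigma$-finite non-atomic measure space. For an invertible nonsingular $T$, $T':=\frac{d\mu\circ T^{-1}}{d\mu}$; $\mathrm{Aut}_1(X,\mathcal{A},\mu)$ is the group of invertible nonsingular $T$ with $T'-1\in L^1(\mu)$, and $\chi(T):=\int_X(T'-1)\,d\mu$. $T$ is conservative if for every $A\in\mathcal A$ with $\mu(A)>0$ there is $n>0$ with $\mu(T^{-n}A\cap A)>0$. *)

theory Defs
  imports "HOL-Analysis.Analysis"
begin

text \<open>Standard Borel space: measurably isomorphic to a Borel subset of the reals
  (equivalent, by Kuratowski's theorem, to being isomorphic to the Borel space of a Polish space).\<close>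
definition standard_borel :: "'a measure \<Rightarrow> bool" where
  "standard_borel M \<longleftrightarrow> (\<exists>(B::real set) f g. B \<in> sets borel \<and>
      f \<in> measurable M (restrict_space borel B) \<and> g \<in> measurable (restrict_space borel B) M \<and>
      (\<forall>x\<in>space M. g (f x) = x) \<and> (\<forall>y\<in>B. f (g y) = y))"

definition non_atomic :: "'a measure \<Rightarrow> bool" where
  "non_atomic M \<longleftrightarrow> (\<forall>A\<in>sets M. 0 < emeasure M A \<longrightarrow>
      (\<exists>B\<in>sets M. B \<subseteq> A \<and> 0 < emeasure M B \<and> emeasure M B < emeasure M A))"

definition inv_nonsingular :: "'a measure \<Rightarrow> ('a \<Rightarrow> 'a) \<Rightarrow> bool" where
  "inv_nonsingular M T \<longleftrightarrow> T \<in> measurable M M \<and> bij_betw T (space M) (space M) \<and>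
     the_inv_into (space M) T \<in> measurable M M \<and>
     (\<forall>A\<in>sets M. emeasure M A = 0 \<longleftrightarrow> emeasure M (T -` A \<inter> space M) = 0)"

text \<open>\<open>T' = d(\<mu>\<circ>T\<^sup>-\<^sup>1)/d\<mu>\<close>; note \<open>distr M M T A = \<mu>(T\<^sup>-\<^sup>1 A)\<close>.\<close>
definition Tder :: "'a measure \<Rightarrow> ('a \<Rightarrow> 'a) \<Rightarrow> 'a \<Rightarrow> real" where
  "Tder M T x = enn2real (RN_deriv M (distr M M T) x)"

definition Aut1 :: "'a measure \<Rightarrow> ('a \<Rightarrow> 'a) set" where
  "Aut1 M = {T. inv_nonsingular M T \<and> integrable M (\<lambda>x. Tder M T x - 1)}"

definition chi :: "'a measure \<Rightarrow> ('a \<Rightarrow> 'a) \<Rightarrow> real" where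
  "chi M T = (\<integral>x. (Tder M T x - 1) \<partial>M)"

definition conservative :: "'a measure \<Rightarrow> ('a \<Rightarrow> 'a) \<Rightarrow> bool" where
  "conservative M T \<longleftrightarrow> (\<forall>A\<in>sets M. 0 < emeasure M A \<longrightarrow>
      (\<exists>n>0. 0 < emeasure M ((T ^^ n) -` A \<inter> A)))"

end

theory Submission
  imports Defs
begin

(* Write g = T' - 1.  For A of finite measure, mu(T^-1 A) - mu(A) = int_A g, so int_A g lies between
   -mu(A - T^-1 A) and mu(T^-1 A - A).  Fix B of finite measure and let A_K be the set of points
   entering B within K steps.  Points of A_K - T^-1 A_K lie in B and do not come back to B within
   K steps; these sets decrease to a wandering set, which is null by conservativity, so int g >= 0
   on the union of the A_K, a superset of B.  The same argument for T^-1, with respect to the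
   measure mu o T^-1, yields a superset of B on which int g <= 0.  Exhausting X by sets B of finite
   measure and using integrability of g gives int g = 0. *)

definition wandering :: "('a \<Rightarrow> 'a) \<Rightarrow> 'a set \<Rightarrow> bool" where
  "wandering R Z \<longleftrightarrow> (\<forall>n>0. (R ^^ n) -` Z \<inter> Z = {})"

lemma conservative_wandering_null:
  assumes "conservative M T" "Z \<in> sets M" "wandering T Z"
  shows "emeasure M Z = 0"
  using assms unfolding conservative_def wandering_def
  by (metis emeasure_empty not_gr_zero)

definition hitting_set :: "'a measure \<Rightarrow> ('a \<Rightarrow> 'a) \<Rightarrow> 'a set \<Rightarrow> nat \<Rightarrow> 'a set" where
  "hitting_set M R B K = {x \<in> space M. \<exists>k\<le>K. (R ^^ k) x \<in> B}"

lemma hitting_set_eq_UN: "hitting_set M R B K = (\<Union>k\<le>K. (R ^^ k) -` B \<inter> space M)"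
  by (auto simp: hitting_set_def)

lemma sets_hitting_set:
  assumes "R \<in> measurable M M" "B \<in> sets M"
  shows "hitting_set M R B K \<in> sets M"
  unfolding hitting_set_eq_UN using assms by (intro sets.finite_UN) (auto intro: measurable_sets)

lemma incseq_hitting_set: "incseq (hitting_set M R B)"
  by (auto simp: incseq_def hitting_set_def intro: order_trans)

lemma subset_hitting_set_0: "B \<subseteq> space M \<Longrightarrow> B \<subseteq> hitting_set M R B 0"
  by (auto simp: hitting_set_def)

lemma hitting_set_Diff_vimage_subset:
  assumes "R \<in> space M \<rightarrow> space M"
  shows "hitting_set M R B K - R -` hitting_set M R B K \<subseteq> B - R -` hitting_set M R B K"
proof
  fix x assume x: "x \<in> hitting_set M R B K - R -` hitting_set M R B K"
  then obtain k where k: "k \<le> K" "(R ^^ k) x \<in> B" "x \<in> space M"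
    by (auto simp: hitting_set_def)
  show "x \<in> B - R -` hitting_set M R B K"
  proof (cases k)
    case (Suc j)
    then have "R x \<in> hitting_set M R B K"
      using k assms by (auto simp: hitting_set_def funpow_swap1 intro!: exI[of _ j])
    then show ?thesis using x by blast
  qed (use k x in simp)
qed

lemma emeasure_hitting_set_less_top:
  assumes R: "R \<in> measurable M M" and B: "B \<in> sets M" "emeasure M B < \<infinity>"
    and vimage_finite: "\<And>A. A \<in> sets M \<Longrightarrow> emeasure M A < \<infinity> \<Longrightarrow> emeasure M (R -` A \<inter> space M) < \<infinity>"
  shows "emeasure M (hitting_set M R B K) < \<infinity>"
proof -
  have finite_k: "emeasure M ((R ^^ k) -` B \<inter> space M) < \<infinity>" for k
  proof (induction k)
    case (Suc k)
    have "(R ^^ Suc k) -` B \<inter> space M = R -` ((R ^^ k) -` B \<inter> space M) \<inter> space M"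
      using R by (auto simp: funpow_swap1 measurable_space)
    then show ?case
      using Suc R B by (metis vimage_finite measurable_compose_n measurable_sets)
  qed (use B sets.sets_into_space in \<open>simp add: Int_absorb2\<close>)
  have "emeasure M (hitting_set M R B K) \<le> (\<Sum>k\<le>K. emeasure M ((R ^^ k) -` B \<inter> space M))"
    unfolding hitting_set_eq_UN using R B
    by (intro emeasure_subadditive_finite) (auto intro: measurable_sets)
  also have "\<dots> < \<infinity>"
    using finite_k by (simp add: ennreal_sum_less_top)
  finally show ?thesis .
qed

lemma measure_hitting_set_Diff_vimage_tendsto_0:
  assumes R: "R \<in> measurable M M" and B: "B \<in> sets M" "emeasure M B < \<infinity>"
    and no_wandering: "\<And>Z. Z \<in> sets M \<Longrightarrow> wandering R Z \<Longrightarrow> emeasure M Z = 0"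
  shows "(\<lambda>K. measure M (hitting_set M R B K - R -` hitting_set M R B K)) \<longlonglongrightarrow> 0"
proof -
  let ?H = "hitting_set M R B"
  define V where "V K = B - R -` ?H K" for K
  have B_space: "B \<subseteq> space M" using B sets.sets_into_space by blast
  have H_sets: "?H K \<in> sets M" for K using R B(1) by (rule sets_hitting_set)
  have V_sets: "V K \<in> sets M" for K
  proof -
    have "V K = B - (R -` ?H K \<inter> space M)" using B_space by (auto simp: V_def)
    then show ?thesis using R B H_sets by (auto intro: measurable_sets)
  qed
  have V_finite: "emeasure M (V K) \<noteq> \<infinity>" for K
    using emeasure_mono[of "V K" B M] B by (auto simp: V_def top_unique)
  have "decseq V"
    using incseq_hitting_set[of M R B] by (auto simp: decseq_def incseq_def V_def)
  have "wandering R (\<Inter>K. V K)"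
    unfolding wandering_def
  proof (intro allI impI equals0I)
    fix n x assume "0 < (n::nat)" "x \<in> (R ^^ n) -` (\<Inter>K. V K) \<inter> (\<Inter>K. V K)"
    then obtain j where "n = Suc j" "x \<in> B" "(R ^^ j) (R x) \<in> B" "\<forall>K. x \<notin> R -` ?H K"
      by (cases n) (auto simp: V_def funpow_swap1)
    moreover have "R x \<in> space M" using \<open>x \<in> B\<close> B_space R by (auto simp: measurable_space)
    ultimately show False by (auto simp: hitting_set_def)
  qed
  then have "measure M (\<Inter>K. V K) = 0"
    using no_wandering V_sets by (simp add: measure_def)
  then have V_lim: "(\<lambda>K. measure M (V K)) \<longlonglongrightarrow> 0"
    using Lim_measure_decseq[of V M] V_sets \<open>decseq V\<close> V_finite by auto
  have "measure M (?H K - R -` ?H K) \<le> measure M (V K)" for K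
  proof (rule measure_mono_fmeasurable)
    show "?H K - R -` ?H K \<subseteq> V K"
      using hitting_set_Diff_vimage_subset[of R M B K] R by (auto simp: V_def measurable_def)
    have "?H K - R -` ?H K = ?H K - (R -` ?H K \<inter> space M)"
      by (auto simp: hitting_set_def)
    then show "?H K - R -` ?H K \<in> sets M"
      using R H_sets by (auto intro: measurable_sets)
    show "V K \<in> fmeasurable M" using V_sets V_finite by (auto simp: fmeasurable_def less_top)
  qed
  then show ?thesis
    by (intro tendsto_sandwich[OF _ _ tendsto_const V_lim]) auto
qed

lemma set_integral_Union_nonneg:
  fixes f :: "'a \<Rightarrow> real"
  assumes f: "integrable M f" and A: "\<And>K. A K \<in> sets M" "incseq A"
    and \<epsilon>: "\<epsilon> \<longlonglongrightarrow> 0" and bound: "\<And>K. - \<epsilon> K \<le> (LINT x:A K|M. f x)"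
  shows "0 \<le> (LINT x:(\<Union>K. A K)|M. f x)"
proof -
  have "(\<lambda>K. - \<epsilon> K) \<longlonglongrightarrow> 0" using tendsto_minus[OF \<epsilon>] by simp
  moreover have "set_integrable M (\<Union>K. A K) f"
    unfolding set_integrable_def using A f by (intro integrable_mult_indicator) auto
  ultimately show ?thesis
    using A bound by (intro LIMSEQ_le[OF _ set_integral_cont_up]) auto
qed

lemma set_integral_Union_nonpos:
  fixes f :: "'a \<Rightarrow> real"
  assumes f: "integrable M f" and A: "\<And>K. A K \<in> sets M" "incseq A"
    and \<epsilon>: "\<epsilon> \<longlonglongrightarrow> 0" and bound: "\<And>K. (LINT x:A K|M. f x) \<le> \<epsilon> K"
  shows "(LINT x:(\<Union>K. A K)|M. f x) \<le> 0"
proof -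
  have "set_integrable M (\<Union>K. A K) f"
    unfolding set_integrable_def using A f by (intro integrable_mult_indicator) auto
  then show ?thesis
    using A bound by (intro LIMSEQ_le[OF set_integral_cont_up \<epsilon>]) auto
qed

lemma (in sigma_finite_measure) integral_nonneg_of_supersets:
  fixes f :: "'a \<Rightarrow> real"
  assumes f: "integrable M f"
    and supersets: "\<And>B. B \<in> sets M \<Longrightarrow> emeasure M B < \<infinity> \<Longrightarrow>
      \<exists>E\<in>sets M. B \<subseteq> E \<and> 0 \<le> (LINT x:E|M. f x)"
  shows "0 \<le> integral\<^sup>L M f"
proof -
  obtain A :: "nat \<Rightarrow> 'a set" where A: "range A \<subseteq> sets M" "(\<Union>i. A i) = space M"
      "\<And>i. emeasure M (A i) \<noteq> \<infinity>" "incseq A"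
    using sigma_finite_incseq by blast
  define r where "r n = (\<integral>x. \<bar>f x\<bar> \<partial>M) - (LINT x:A n|M. \<bar>f x\<bar>)" for n
  have "set_integrable M (\<Union>i. A i) (\<lambda>x. \<bar>f x\<bar>)"
    unfolding set_integrable_def using A f by (intro integrable_mult_indicator) auto
  then have "(\<lambda>n. LINT x:A n|M. \<bar>f x\<bar>) \<longlonglongrightarrow> (LINT x:(\<Union>i. A i)|M. \<bar>f x\<bar>)"
    using A by (intro set_integral_cont_up) auto
  then have "r \<longlonglongrightarrow> (\<integral>x. \<bar>f x\<bar> \<partial>M) - (\<integral>x. \<bar>f x\<bar> \<partial>M)"
    unfolding r_def A(2) set_integral_space[OF integrable_abs[OF f]]
    by (intro tendsto_diff tendsto_const)
  then have "(\<lambda>n. - r n) \<longlonglongrightarrow> 0"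
    using tendsto_minus by fastforce
  moreover have "- r n \<le> integral\<^sup>L M f" for n
  proof -
    obtain E where E: "E \<in> sets M" "A n \<subseteq> E" "0 \<le> (LINT x:E|M. f x)"
      using supersets[of "A n"] A by (auto simp: less_top)
    have iE: "integrable M (\<lambda>x. indicator E x * f x)"
      using integrable_mult_indicator[OF E(1) f] by simp
    have iA: "integrable M (\<lambda>x. indicator (A n) x * \<bar>f x\<bar>)"
      using integrable_mult_indicator[OF _ integrable_abs[OF f], of "A n"] A(1) by auto
    have "(LINT x:E|M. f x) - r n = (\<integral>x. indicator E x * f x - (\<bar>f x\<bar> - indicator (A n) x * \<bar>f x\<bar>) \<partial>M)"
      using iE iA f unfolding r_def set_lebesgue_integral_def by simp
    also have "\<dots> \<le> integral\<^sup>L M f"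
      using iE iA f E(2) by (intro integral_mono) (auto simp: indicator_def)
    finally show ?thesis using E by linarith
  qed
  ultimately show ?thesis
    by (intro LIMSEQ_le_const2) auto
qed


lemma (in sigma_finite_measure) integral_nonpos_of_supersets:
  fixes f :: "'a \<Rightarrow> real"
  assumes f: "integrable M f"
    and supersets: "\<And>B. B \<in> sets M \<Longrightarrow> emeasure M B < \<infinity> \<Longrightarrow>
      \<exists>E\<in>sets M. B \<subseteq> E \<and> (LINT x:E|M. f x) \<le> 0"
  shows "integral\<^sup>L M f \<le> 0"
proof -
  have "0 \<le> (\<integral>x. - f x \<partial>M)"
  proof (rule integral_nonneg_of_supersets)
    show "integrable M (\<lambda>x. - f x)" using f by simp
    fix B assume "B \<in> sets M" "emeasure M B < \<infinity>"
    then obtain E where E: "E \<in> sets M" "B \<subseteq> E" "(LINT x:E|M. f x) \<le> 0"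
      using supersets by blast
    moreover have "(LINT x:E|M. - f x) = - (LINT x:E|M. f x)"
      using integrable_mult_indicator[OF E(1) f] by (intro set_integral_uminus) (simp add: set_integrable_def)
    ultimately show "\<exists>E\<in>sets M. B \<subseteq> E \<and> 0 \<le> (LINT x:E|M. - f x)"
      by (intro bexI[of _ E]) auto
  qed
  then show ?thesis by simp
qed

locale Aut1_transformation = sigma_finite_measure M for M :: "'a measure" +
  fixes T :: "'a \<Rightarrow> 'a"
  assumes T_Aut1: "T \<in> Aut1 M"
begin

abbreviation T_inv :: "'a \<Rightarrow> 'a" where
  "T_inv \<equiv> the_inv_into (space M) T"

lemma measurable_T [measurable]: "T \<in> measurable M M"
  and bij_betw_T: "bij_betw T (space M) (space M)"
  and measurable_T_inv [measurable]: "T_inv \<in> measurable M M"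
  and null_vimage_iff: "A \<in> sets M \<Longrightarrow> emeasure M (T -` A \<inter> space M) = 0 \<longleftrightarrow> emeasure M A = 0"
  and integrable_Tder: "integrable M (\<lambda>x. Tder M T x - 1)"
  using T_Aut1 by (auto simp: Aut1_def inv_nonsingular_def)

lemma borel_measurable_Tder [measurable]: "Tder M T \<in> borel_measurable M"
  unfolding Tder_def[abs_def] by measurable

lemma T_inv_T [simp]: "x \<in> space M \<Longrightarrow> T_inv (T x) = x"
  using bij_betw_T by (simp add: bij_betw_def the_inv_into_f_f)

lemma T_space [simp]: "x \<in> space M \<Longrightarrow> T x \<in> space M"
  using measurable_T by (rule measurable_space)

lemma T_inv_space [simp]: "x \<in> space M \<Longrightarrow> T_inv x \<in> space M"
  using measurable_T_inv by (rule measurable_space)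

lemma vimage_T_vimage_T_inv: "T -` (T_inv -` A \<inter> space M) \<inter> space M = A \<inter> space M"
  by auto

lemma funpow_T_inv_funpow_T: "x \<in> space M \<Longrightarrow> (T_inv ^^ n) ((T ^^ n) x) = x"
proof (induction n arbitrary: x)
  case (Suc n)
  have "(T ^^ n) x \<in> space M"
    using Suc.prems measurable_compose_n[OF measurable_T] by (rule measurable_space[rotated])
  then show ?case using Suc by (simp add: funpow_swap1)
qed simp

lemma wandering_T_inv_imp_wandering_T:
  assumes "Z \<subseteq> space M" "wandering T_inv Z"
  shows "wandering T Z"
  unfolding wandering_def
proof (intro allI impI equals0I)
  fix n x assume n: "0 < (n::nat)" and x: "x \<in> (T ^^ n) -` Z \<inter> Z"
  then have "(T ^^ n) x \<in> (T_inv ^^ n) -` Z \<inter> Z"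
    using assms(1) funpow_T_inv_funpow_T[of x n] by auto
  then show False using assms(2) n by (auto simp: wandering_def)
qed

lemma absolutely_continuous_distr: "absolutely_continuous M (distr M M T)"
  unfolding absolutely_continuous_def
  by (auto simp: null_sets_def emeasure_distr null_vimage_iff)

lemma sigma_finite_distr: "sigma_finite_measure (distr M M T)"
proof
  obtain A :: "nat \<Rightarrow> 'a set" where A: "range A \<subseteq> sets M" "(\<Union>i. A i) = space M"
      "\<And>i. emeasure M (A i) \<noteq> \<infinity>"
    using sigma_finite by blast
  let ?C = "\<lambda>i. T_inv -` A i \<inter> space M"
  have "?C i \<in> sets M" for i using A(1) by (auto intro: measurable_sets)
  moreover have "emeasure (distr M M T) (?C i) = emeasure M (A i)" for i
  proof -
    have "T -` ?C i \<inter> space M = A i"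
      using A(1) sets.sets_into_space[of "A i" M] by (subst vimage_T_vimage_T_inv) auto
    then show ?thesis using calculation by (simp add: emeasure_distr)
  qed
  moreover have "(\<Union>i. ?C i) = space M" using A(2) T_inv_space by fastforce
  ultimately show "\<exists>C. countable C \<and> C \<subseteq> sets (distr M M T) \<and> \<Union> C = space (distr M M T) \<and>
      (\<forall>c\<in>C. emeasure (distr M M T) c \<noteq> \<infinity>)"
    using A(3) by (intro exI[of _ "range ?C"]) auto
qed

lemma emeasure_vimage_eq_nn_integral:
  assumes "A \<in> sets M"
  shows "emeasure M (T -` A \<inter> space M) = (\<integral>\<^sup>+x. ennreal (Tder M T x) * indicator A x \<partial>M)"
proof -
  have "emeasure M (T -` A \<inter> space M) = emeasure (density M (RN_deriv M (distr M M T))) A"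
    using assms by (simp add: density_RN_deriv[OF absolutely_continuous_distr] emeasure_distr)
  also have "\<dots> = (\<integral>\<^sup>+x. RN_deriv M (distr M M T) x * indicator A x \<partial>M)"
    using assms by (simp add: emeasure_density)
  also have "\<dots> = (\<integral>\<^sup>+x. ennreal (Tder M T x) * indicator A x \<partial>M)"
    using RN_deriv_finite[OF sigma_finite_distr absolutely_continuous_distr]
    by (intro nn_integral_cong_AE) (auto simp: Tder_def less_top)
  finally show ?thesis .
qed

lemma set_integrable_Tder:
  assumes "A \<in> sets M" "emeasure M A < \<infinity>"
  shows "set_integrable M A (Tder M T)"
proof -
  have "integrable M (\<lambda>x. indicator A x + indicator A x *\<^sub>R (Tder M T x - 1))"
    using assms integrable_mult_indicator[OF assms(1) integrable_Tder]
    by (intro Bochner_Integration.integrable_add) (auto simp: less_top)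
  then show ?thesis
    unfolding set_integrable_def by (simp add: algebra_simps)
qed

lemma emeasure_vimage_eq_set_integral:
  assumes "A \<in> sets M" "emeasure M A < \<infinity>"
  shows "emeasure M (T -` A \<inter> space M) = ennreal (LINT x:A|M. Tder M T x)"
proof -
  have "(\<integral>\<^sup>+x. ennreal (Tder M T x) * indicator A x \<partial>M) = (\<integral>\<^sup>+x. ennreal (indicator A x *\<^sub>R Tder M T x) \<partial>M)"
    by (intro nn_integral_cong) (simp split: split_indicator)
  also have "\<dots> = ennreal (LINT x:A|M. Tder M T x)"
    using set_integrable_Tder[OF assms] unfolding set_lebesgue_integral_def set_integrable_def
    by (intro nn_integral_eq_integral) (auto simp: Tder_def)
  finally show ?thesis by (simp add: emeasure_vimage_eq_nn_integral[OF assms(1)])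
qed

lemma emeasure_vimage_less_top:
  "A \<in> sets M \<Longrightarrow> emeasure M A < \<infinity> \<Longrightarrow> emeasure M (T -` A \<inter> space M) < \<infinity>"
  by (simp add: emeasure_vimage_eq_set_integral)

lemma measure_vimage:
  assumes "A \<in> sets M" "emeasure M A < \<infinity>"
  shows "measure M (T -` A \<inter> space M) = measure M A + (LINT x:A|M. Tder M T x - 1)"
proof -
  have "0 \<le> (LINT x:A|M. Tder M T x)"
    unfolding set_lebesgue_integral_def by (intro integral_nonneg_AE) (simp add: Tder_def)
  then have "measure M (T -` A \<inter> space M) = (LINT x:A|M. Tder M T x)"
    by (simp add: measure_def emeasure_vimage_eq_set_integral[OF assms])
  also have "\<dots> = measure M A + (LINT x:A|M. Tder M T x - 1)"
    using assms set_integrable_Tder[OF assms]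
    by (simp add: set_integral_diff set_integral_const set_integrable_def less_top)
  finally show ?thesis .
qed

lemma emeasure_le_vimage:
  assumes "A \<in> sets M"
  shows "emeasure M A \<le> emeasure M (T -` A \<inter> space M) + (\<integral>\<^sup>+x. ennreal \<bar>Tder M T x - 1\<bar> \<partial>M)"
proof -
  have "emeasure M A = (\<integral>\<^sup>+x. indicator A x \<partial>M)"
    using assms by simp
  also have "\<dots> \<le> (\<integral>\<^sup>+x. ennreal (Tder M T x) * indicator A x + ennreal \<bar>Tder M T x - 1\<bar> \<partial>M)"
  proof (intro nn_integral_mono)
    fix x
    have "1 \<le> ennreal (Tder M T x + \<bar>Tder M T x - 1\<bar>)" by simp
    then show "indicator A x \<le> ennreal (Tder M T x) * indicator A x + ennreal \<bar>Tder M T x - 1\<bar>"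
      by (simp add: ennreal_plus Tder_def split: split_indicator)
  qed
  also have "\<dots> = emeasure M (T -` A \<inter> space M) + (\<integral>\<^sup>+x. ennreal \<bar>Tder M T x - 1\<bar> \<partial>M)"
    using assms by (simp add: nn_integral_add emeasure_vimage_eq_nn_integral)
  finally show ?thesis .
qed

lemma emeasure_vimage_T_inv_less_top:
  assumes "A \<in> sets M" "emeasure M A < \<infinity>"
  shows "emeasure M (T_inv -` A \<inter> space M) < \<infinity>"
proof -
  have "T -` (T_inv -` A \<inter> space M) \<inter> space M = A"
    using sets.sets_into_space[OF assms(1)] by (subst vimage_T_vimage_T_inv) auto
  then have "emeasure M (T_inv -` A \<inter> space M) \<le> emeasure M A + (\<integral>\<^sup>+x. ennreal \<bar>Tder M T x - 1\<bar> \<partial>M)"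
    using emeasure_le_vimage[of "T_inv -` A \<inter> space M"] assms(1) by (simp add: measurable_sets)
  also have "\<dots> < \<infinity>"
    using assms(2) integrable_Tder by (simp add: integrable_iff_bounded)
  finally show ?thesis .
qed

lemma set_integral_Tder_ge:
  assumes "A \<in> sets M" "emeasure M A < \<infinity>"
  shows "- measure M (A - T -` A) \<le> (LINT x:A|M. Tder M T x - 1)"
proof -
  let ?A' = "T -` A \<inter> space M"
  have fin: "A \<in> fmeasurable M" "?A' \<in> fmeasurable M"
    using assms emeasure_vimage_less_top[OF assms] by (auto intro: fmeasurableI measurable_sets)
  have "measure M A \<le> measure M (?A' \<union> A)"
    using fin by (intro measure_mono_fmeasurable) auto
  also have "\<dots> = measure M ?A' + measure M (A - ?A')"
    using fin by (simp add: measure_Un2)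
  also have "A - ?A' = A - T -` A"
    using sets.sets_into_space[OF assms(1)] by auto
  finally show ?thesis using measure_vimage[OF assms] by linarith
qed

lemma set_integral_Tder_le:
  assumes "A \<in> sets M" "emeasure M A < \<infinity>"
  shows "(LINT x:A|M. Tder M T x - 1) \<le> measure M (T -` A \<inter> space M - A)"
proof -
  let ?A' = "T -` A \<inter> space M"
  have fin: "A \<in> fmeasurable M" "?A' \<in> fmeasurable M"
    using assms emeasure_vimage_less_top[OF assms] by (auto intro: fmeasurableI measurable_sets)
  have "measure M ?A' \<le> measure M (A \<union> ?A')"
    using fin by (intro measure_mono_fmeasurable) auto
  also have "\<dots> = measure M A + measure M (?A' - A)"
    using fin by (simp add: measure_Un2)
  finally show ?thesis using measure_vimage[OF assms] by linarith
qed

lemma conservative_superset_set_integral_nonneg: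
  assumes "conservative M T" and B: "B \<in> sets M" "emeasure M B < \<infinity>"
  shows "\<exists>E\<in>sets M. B \<subseteq> E \<and> 0 \<le> (LINT x:E|M. Tder M T x - 1)"
proof -
  let ?H = "hitting_set M T B"
  have H_sets: "?H K \<in> sets M" for K
    using measurable_T B(1) by (rule sets_hitting_set)
  have H_finite: "emeasure M (?H K) < \<infinity>" for K
    using measurable_T B emeasure_vimage_less_top by (rule emeasure_hitting_set_less_top)
  have "(\<lambda>K. measure M (?H K - T -` ?H K)) \<longlonglongrightarrow> 0"
    using measurable_T B conservative_wandering_null[OF assms(1)]
    by (rule measure_hitting_set_Diff_vimage_tendsto_0)
  then have "0 \<le> (LINT x:(\<Union>K. ?H K)|M. Tder M T x - 1)"
    by (rule set_integral_Union_nonneg[OF integrable_Tder H_sets incseq_hitting_set])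
      (rule set_integral_Tder_ge[OF H_sets H_finite])
  moreover have "B \<subseteq> (\<Union>K. ?H K)"
    using subset_hitting_set_0[OF sets.sets_into_space[OF B(1)]] by blast
  ultimately show ?thesis using H_sets by blast
qed

lemma conservative_superset_set_integral_nonpos:
  assumes "conservative M T" and B: "B \<in> sets M" "emeasure M B < \<infinity>"
  shows "\<exists>E\<in>sets M. B \<subseteq> E \<and> (LINT x:E|M. Tder M T x - 1) \<le> 0"
proof -
  let ?N = "distr M M T"
  let ?H = "hitting_set M T_inv B"
  have measure_N: "measure ?N X = measure M (T -` X \<inter> space M)" if "X \<in> sets M" for X
    using that by (simp add: measure_distr)
  have H_sets: "?H K \<in> sets M" for K
    using measurable_T_inv B(1) by (rule sets_hitting_set)
  have H_finite: "emeasure M (?H K) < \<infinity>" for K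
    using measurable_T_inv B emeasure_vimage_T_inv_less_top by (rule emeasure_hitting_set_less_top)
  have H_N: "hitting_set ?N T_inv B = ?H"
    by (intro ext) (simp add: hitting_set_def)
  have "(\<lambda>K. measure ?N (?H K - T_inv -` ?H K)) \<longlonglongrightarrow> 0"
    unfolding H_N[symmetric]
  proof (rule measure_hitting_set_Diff_vimage_tendsto_0)
    show "T_inv \<in> measurable ?N ?N" by simp
    show "B \<in> sets ?N" using B by simp
    show "emeasure ?N B < \<infinity>"
      using B emeasure_vimage_less_top[OF B] by (simp add: emeasure_distr)
    show "emeasure ?N Z = 0" if Z: "Z \<in> sets ?N" "wandering T_inv Z" for Z
    proof -
      have "Z \<in> sets M" using Z(1) by simp
      moreover have "wandering T Z"
        using wandering_T_inv_imp_wandering_T[OF sets.sets_into_space Z(2)] \<open>Z \<in> sets M\<close> .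
      ultimately have "emeasure M Z = 0" using assms(1) by (rule conservative_wandering_null[rotated])
      then show ?thesis using \<open>Z \<in> sets M\<close> by (simp add: emeasure_distr null_vimage_iff)
    qed
  qed
  moreover have "measure ?N (?H K - T_inv -` ?H K) = measure M (T -` ?H K \<inter> space M - ?H K)" for K
  proof -
    have "T -` (?H K - T_inv -` ?H K) \<inter> space M = T -` ?H K \<inter> space M - ?H K"
      using sets.sets_into_space[OF H_sets] by auto
    moreover have "?H K - T_inv -` ?H K = ?H K - (T_inv -` ?H K \<inter> space M)"
      by (auto simp: hitting_set_def)
    ultimately show ?thesis using H_sets by (simp add: measure_N measurable_sets)
  qed
  ultimately have "(\<lambda>K. measure M (T -` ?H K \<inter> space M - ?H K)) \<longlonglongrightarrow> 0"
    by simp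
  then have "(LINT x:(\<Union>K. ?H K)|M. Tder M T x - 1) \<le> 0"
    by (rule set_integral_Union_nonpos[OF integrable_Tder H_sets incseq_hitting_set])
      (rule set_integral_Tder_le[OF H_sets H_finite])
  moreover have "B \<subseteq> (\<Union>K. ?H K)"
    using subset_hitting_set_0[OF sets.sets_into_space[OF B(1)]] by blast
  ultimately show ?thesis using H_sets by blast
qed

end

theorem proposition4p4:
  fixes M :: "'a measure" and T :: "'a \<Rightarrow> 'a"
  assumes "sigma_finite_measure M" and "standard_borel M" and "non_atomic M"
    and "T \<in> Aut1 M" and "conservative M T"
  shows "chi M T = 0"
proof -
  interpret Aut1_transformation M T
    using assms(1,4) by (intro Aut1_transformation.intro Aut1_transformation_axioms.intro)
  have "0 \<le> (\<integral>x. Tder M T x - 1 \<partial>M)"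
    using integrable_Tder conservative_superset_set_integral_nonneg[OF assms(5)]
    by (rule integral_nonneg_of_supersets)
  moreover have "(\<integral>x. Tder M T x - 1 \<partial>M) \<le> 0"
    using integrable_Tder conservative_superset_set_integral_nonpos[OF assms(5)]
    by (rule integral_nonpos_of_supersets)
  ultimately show ?thesis
    unfolding chi_def by linarith
qed

end
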